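(* Let $n\ge 2$, let $\Omega$ be a compact subset of $\mathbb{R}^n$, let $\widetilde\Omega=\mathrm{conv}(\Omega)$, and let $v\in S^{n-1}$. Put $\widetilde\Omega^+_{v,b}=\widetilde\Omega\cap\{x\in\mathbb{R}^n : x\cdot v>b\}$. Then for every $z\in \widetilde\Omega^+_{v,l_\Omega(v)}$, the closed segment $\overline{zz'}$ with $z'=\mathrm{R}_{v,l_\Omega(v)}(z)$ is contained in $\widetilde\Omega$.
   Context: $\mathrm{conv}(\Omega)$ is the convex hull of $\Omega$; $S^{n-1}$ is the unit sphere in $\mathbb{R}^n$. For $X\subset\mathbb{R}^n$, $v\in S^{n-1}$ and $b\in\mathbb{R}$, put $X^+_{v,b}=X\cap\{x\in\mathbb{R}^n : x\cdot v>b\}$, and let $\mathrm{R}_{v,b}$ be the reflection of $\mathbb{R}^n$ in the hyperplane $\{x : x\cdot v=b\}$. For a bounded $X\subset\mathbb{R}^n$, $l_X(v)=\inf\{a : \mathrm{R}_{v,c}(X^+_{v,c})\subset X \text{ for every } c\ge a\}$. $\overline{xy}$ denotes the closed line segment joining $x$ and $y$. *)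

theory Defs
  imports "HOL-Analysis.Analysis"
begin

definition cap :: "('a::real_inner) set \<Rightarrow> 'a \<Rightarrow> real \<Rightarrow> 'a set" where
  "cap X v b = X \<inter> {x. x \<bullet> v > b}"

definition refl_hyp :: "'a::real_inner \<Rightarrow> real \<Rightarrow> 'a \<Rightarrow> 'a" where
  "refl_hyp v b x = x - (2 * (x \<bullet> v - b)) *\<^sub>R v"

text \<open>For unit v, this is the reflection in the hyperplane {x. x \<bullet> v = b}.\<close>

definition lX :: "('a::real_inner) set \<Rightarrow> 'a \<Rightarrow> real" where
  "lX X v = Inf {a. \<forall>c\<ge>a. refl_hyp v c ` cap X v c \<subseteq> X}"

end

theory Submission
  imports Defs
begin

text \<open>Since \<open>\<Omega>\<close> is closed, the reflection at the critical level \<open>l = l\<^sub>\<Omega>(v)\<close> itself maps the cap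
  of \<open>\<Omega>\<close> into \<open>\<Omega>\<close> (reflections at levels \<open>c \<down> l\<close> converge). Given a level \<open>c\<close> with this
  property, the points \<open>y\<close> of the convex hull from which one can move down in direction \<open>-v\<close>
  by at least \<open>2(y\<cdot>v - c)\<close> without leaving the hull form a convex set containing \<open>\<Omega>\<close>:
  for \<open>x \<in> \<Omega>\<close> above the hyperplane its reflection is such a move. Hence every \<open>z\<close> of the hull
  lies on a vertical segment inside the hull that reaches down to its reflection.\<close>

definition cap_reflects :: "('a::real_inner) set \<Rightarrow> 'a \<Rightarrow> real \<Rightarrow> bool" where
  "cap_reflects X v c \<longleftrightarrow> refl_hyp v c ` cap X v c \<subseteq> X"

lemma lX_eq_Inf_cap_reflects: "lX X v = Inf {a. \<forall>c\<ge>a. cap_reflects X v c}"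
  by (simp add: lX_def cap_reflects_def)

lemma inner_refl_hyp:
  assumes "norm v = 1"
  shows "refl_hyp v c x \<bullet> v = 2 * c - x \<bullet> v"
  using assms by (simp add: refl_hyp_def inner_diff_left norm_eq_1 algebra_simps)

lemma cap_reflects_above_lX:
  fixes X :: "'a::real_inner set"
  assumes "bounded X" "X \<noteq> {}" "norm v = 1" "c > lX X v"
  shows "cap_reflects X v c"
proof -
  define A where "A = {a. \<forall>c\<ge>a. cap_reflects X v c}"
  obtain B where B: "\<And>x. x \<in> X \<Longrightarrow> norm x \<le> B"
    using assms(1) bounded_iff by blast
  have vB: "\<bar>x \<bullet> v\<bar> \<le> B" if "x \<in> X" for x
    using Cauchy_Schwarz_ineq2[of x v] assms(3) B[OF that] by simp
  have "B + 1 \<in> A"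
    unfolding A_def cap_reflects_def cap_def using vB by force
  hence "A \<noteq> {}" by auto
  moreover have "bdd_below A"
  proof (rule bdd_belowI)
    fix a assume "a \<in> A"
    obtain x where x: "x \<in> X" using assms(2) by auto
    show "- B \<le> a"
    proof (rule ccontr)
      assume "\<not> - B \<le> a"
      with x vB have "x \<in> cap X v a" by (force simp: cap_def)
      with \<open>a \<in> A\<close> have "refl_hyp v a x \<in> X" by (auto simp: A_def cap_reflects_def)
      with vB[OF x] vB[of "refl_hyp v a x"] \<open>\<not> - B \<le> a\<close> show False
        by (simp add: inner_refl_hyp[OF assms(3)])
    qed
  qed
  ultimately obtain a where "a \<in> A" "a < c"
    using assms(4) cInf_less_iff[of A c] by (auto simp: lX_eq_Inf_cap_reflects A_def)
  thus ?thesis by (simp add: A_def)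
qed

lemma cap_reflects_lX:
  fixes X :: "'a::real_inner set"
  assumes "compact X" "X \<noteq> {}" "norm v = 1"
  shows "cap_reflects X v (lX X v)"
  unfolding cap_reflects_def
proof (rule image_subsetI)
  fix x assume "x \<in> cap X v (lX X v)"
  hence x: "x \<in> X" "x \<bullet> v > lX X v" by (auto simp: cap_def)
  have "((\<lambda>c. refl_hyp v c x) \<longlongrightarrow> refl_hyp v (lX X v) x) (at_right (lX X v))"
    unfolding refl_hyp_def by (intro tendsto_intros)
  moreover have "\<forall>\<^sub>F c in at_right (lX X v). refl_hyp v c x \<in> X"
  proof -
    have "\<forall>\<^sub>F c in at_right (lX X v). lX X v < c \<and> c < x \<bullet> v"
      using x(2) by (auto simp: eventually_at_right)
    thus ?thesis
    proof (rule eventually_mono)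
      fix c assume "lX X v < c \<and> c < x \<bullet> v"
      with cap_reflects_above_lX[OF compact_imp_bounded[OF assms(1)] assms(2,3)] x(1)
      show "refl_hyp v c x \<in> X" by (auto simp: cap_reflects_def cap_def)
    qed
  qed
  ultimately show "refl_hyp v (lX X v) x \<in> X"
    using compact_imp_closed[OF assms(1)] by (auto intro: Lim_in_closed_set)
qed

lemma convex_hull_descends_past_reflection:
  fixes X :: "'a::real_inner set"
  assumes "cap_reflects X v c" "z \<in> convex hull X"
  shows "\<exists>t \<ge> 2 * (z \<bullet> v - c). z - t *\<^sub>R v \<in> convex hull X"
proof -
  define P where "P = {y. \<exists>t \<ge> 2 * (y \<bullet> v - c). y - t *\<^sub>R v \<in> convex hull X}"
  have "X \<subseteq> P"
  proof
    fix x assume x: "x \<in> X"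
    show "x \<in> P"
    proof (cases "x \<bullet> v > c")
      case True
      with x assms(1) have "x - (2 * (x \<bullet> v - c)) *\<^sub>R v \<in> X"
        by (auto simp: cap_reflects_def cap_def refl_hyp_def)
      thus ?thesis
        unfolding P_def by (intro CollectI exI[of _ "2 * (x \<bullet> v - c)"]) (auto intro: hull_inc)
    next
      case False
      with x show ?thesis unfolding P_def by (intro CollectI exI[of _ 0]) (auto intro: hull_inc)
    qed
  qed
  moreover have "convex P"
    unfolding convex_def
  proof (intro ballI allI impI)
    fix y1 y2 and u1 u2 :: real
    assume "y1 \<in> P" "y2 \<in> P" and u: "0 \<le> u1" "0 \<le> u2" "u1 + u2 = 1"
    then obtain t1 t2 where t1: "t1 \<ge> 2 * (y1 \<bullet> v - c)" "y1 - t1 *\<^sub>R v \<in> convex hull X"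
      and t2: "t2 \<ge> 2 * (y2 \<bullet> v - c)" "y2 - t2 *\<^sub>R v \<in> convex hull X"
      unfolding P_def by blast
    have "2 * ((u1 *\<^sub>R y1 + u2 *\<^sub>R y2) \<bullet> v - c)
        = u1 * (2 * (y1 \<bullet> v - c)) + u2 * (2 * (y2 \<bullet> v - c))"
      using u(3) by (simp add: inner_add_left algebra_simps)
        (metis distrib_left mult.commute mult_1 mult.assoc)
    then have "2 * ((u1 *\<^sub>R y1 + u2 *\<^sub>R y2) \<bullet> v - c) \<le> u1 * t1 + u2 * t2"
      using mult_left_mono[OF t1(1) u(1)] mult_left_mono[OF t2(1) u(2)] by linarith
    moreover have "u1 *\<^sub>R (y1 - t1 *\<^sub>R v) + u2 *\<^sub>R (y2 - t2 *\<^sub>R v) \<in> convex hull X"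
      using convexD[OF convex_convex_hull t1(2) t2(2) u] .
    moreover have "u1 *\<^sub>R (y1 - t1 *\<^sub>R v) + u2 *\<^sub>R (y2 - t2 *\<^sub>R v)
        = (u1 *\<^sub>R y1 + u2 *\<^sub>R y2) - (u1 * t1 + u2 * t2) *\<^sub>R v"
      by (simp add: algebra_simps)
    ultimately show "u1 *\<^sub>R y1 + u2 *\<^sub>R y2 \<in> P"
      unfolding P_def by (intro CollectI exI[of _ "u1 * t1 + u2 * t2"]) simp
  qed
  ultimately have "convex hull X \<subseteq> P"
    by (rule hull_minimal)
  with assms(2) show ?thesis
    unfolding P_def by auto
qed

lemma diff_scaleR_in_closed_segment:
  fixes z v :: "'a::real_vector"
  assumes "0 \<le> s" "s \<le> t"
  shows "z - s *\<^sub>R v \<in> closed_segment z (z - t *\<^sub>R v)"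
proof (cases "t = 0")
  case True
  with assms show ?thesis by simp
next
  case False
  then have "z - s *\<^sub>R v = (1 - s / t) *\<^sub>R z + (s / t) *\<^sub>R (z - t *\<^sub>R v)"
    by (simp add: algebra_simps)
  with assms False show ?thesis
    unfolding in_segment by (intro exI[of _ "s / t"]) auto
qed

theorem lemma2p2:
  fixes \<Omega> :: "(real ^ 'n) set" and v :: "real ^ 'n" and z :: "real ^ 'n"
  assumes "CARD('n) \<ge> 2"
    and "compact \<Omega>"
    and "norm v = 1"
    and "z \<in> cap (convex hull \<Omega>) v (lX \<Omega> v)"
  shows "closed_segment z (refl_hyp v (lX \<Omega> v) z) \<subseteq> convex hull \<Omega>"
proof -
  define l where "l = lX \<Omega> v"
  have z: "z \<in> convex hull \<Omega>" "z \<bullet> v > l"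
    using assms(4) by (auto simp: cap_def l_def)
  then have "cap_reflects \<Omega> v l"
    unfolding l_def by (intro cap_reflects_lX assms(2,3)) auto
  then obtain t where t: "t \<ge> 2 * (z \<bullet> v - l)" "z - t *\<^sub>R v \<in> convex hull \<Omega>"
    using convex_hull_descends_past_reflection[OF _ z(1)] by blast
  have "refl_hyp v l z \<in> closed_segment z (z - t *\<^sub>R v)"
    unfolding refl_hyp_def using t(1) z(2) by (intro diff_scaleR_in_closed_segment) auto
  also have "closed_segment z (z - t *\<^sub>R v) \<subseteq> convex hull \<Omega>"
    using closed_segment_subset[OF z(1) t(2) convex_convex_hull] .
  finally have "refl_hyp v l z \<in> convex hull \<Omega>" .
  then show ?thesis
    unfolding l_def[symmetric] by (rule closed_segment_subset[OF z(1) _ convex_convex_hull])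
qed

end
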